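(* Let $G=(V,E,w)$ be a connected undirected graph with positive integer edge weights, Laplacian $\mathcal L=B^TWB$ ($W=\mathrm{diag}(w)$) and Moore–Penrose pseudoinverse $\mathcal L^+$. Let $U\subseteq V$ be such that the induced subgraph $G(U)=(U,E(U))$ has at least one edge and conductance $\Phi(G(U))>0$. Then for every edge $(s,t)\in E$, letting $v=\mathcal L^+(\mathbb{1}_s-\mathbb{1}_t)$, $$\sum_{\{a,b\}\in E(U)}w_{ab}\,|v(a)-v(b)|\le\frac{8\ln\big(\mathrm{vol}(G(U))\big)}{\Phi(G(U))^2}.$$
   Context: $E(U)$ is the set of edges of $G$ with both endpoints in $U$. In $G(U)$, the degree of $a$ is $d(a)=\sum_{\{a,b\}\in E(U)}w_{ab}$, $\mathrm{vol}(S)=\sum_{a\in S}d(a)$, $\mathrm{vol}(G(U))=\mathrm{vol}(U)$, and the conductance is $\Phi(G(U))=\min_{\emptyset\ne S\subsetneq U}\frac{w(\partial_{G(U)}(S))}{\min\{\mathrm{vol}(S),\mathrm{vol}(U\setminus S)\}}$, where $\partial_{G(U)}(S)$ is the set of edges of $E(U)$ with exactly one endpoint in $S$ and $w(F)=\sum_{e\in F}w_e$. *)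

theory Defs
  imports "HOL-Analysis.Analysis"
begin

text \<open>A weighted undirected graph on the finite vertex type 'a is given by a
symmetric weight function w :: 'a => 'a => nat with no loops; {a,b} is an edge
iff w a b > 0, and then w a b is its (positive integer) weight.\<close>

definition wgraph :: "('a \<Rightarrow> 'a \<Rightarrow> nat) \<Rightarrow> bool" where
  "wgraph w \<longleftrightarrow> (\<forall>a b. w a b = w b a) \<and> (\<forall>a. w a a = 0)"

definition edge_rel :: "('a \<Rightarrow> 'a \<Rightarrow> nat) \<Rightarrow> ('a \<times> 'a) set" where
  "edge_rel w = {(a, b). 0 < w a b}"

definition connected_graph :: "('a \<Rightarrow> 'a \<Rightarrow> nat) \<Rightarrow> bool" where
  "connected_graph w \<longleftrightarrow> (\<forall>a b. (a, b) \<in> (edge_rel w)\<^sup>*)"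

definition laplacian :: "('a::finite \<Rightarrow> 'a \<Rightarrow> nat) \<Rightarrow> real^'a^'a" where
  "laplacian w = (\<chi> a b. if a = b then (\<Sum>c\<in>UNIV. real (w a c)) else - real (w a b))"

definition pinv :: "real^'n^'n \<Rightarrow> real^'n^'n" where
  "pinv A = (THE X. A ** X ** A = A \<and> X ** A ** X = X \<and>
                    transpose (A ** X) = A ** X \<and> transpose (X ** A) = X ** A)"

definition indic_vec :: "'a \<Rightarrow> real^'a" where
  "indic_vec s = (\<chi> i. if i = s then 1 else 0)"

definition has_edge_in :: "('a \<Rightarrow> 'a \<Rightarrow> nat) \<Rightarrow> 'a set \<Rightarrow> bool" where
  "has_edge_in w U \<longleftrightarrow> (\<exists>a\<in>U. \<exists>b\<in>U. 0 < w a b)"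

definition degU :: "('a \<Rightarrow> 'a \<Rightarrow> nat) \<Rightarrow> 'a set \<Rightarrow> 'a \<Rightarrow> real" where
  "degU w U a = (\<Sum>b\<in>U. real (w a b))"

definition volU :: "('a \<Rightarrow> 'a \<Rightarrow> nat) \<Rightarrow> 'a set \<Rightarrow> 'a set \<Rightarrow> real" where
  "volU w U S = (\<Sum>a\<in>S. degU w U a)"

definition cutU :: "('a \<Rightarrow> 'a \<Rightarrow> nat) \<Rightarrow> 'a set \<Rightarrow> 'a set \<Rightarrow> real" where
  "cutU w U S = (\<Sum>a\<in>S. \<Sum>b\<in>U - S. real (w a b))"

definition conductance :: "('a \<Rightarrow> 'a \<Rightarrow> nat) \<Rightarrow> 'a set \<Rightarrow> real" where
  "conductance w U = Min ((\<lambda>S. cutU w U S / min (volU w U S) (volU w U (U - S)))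
                          ` {S. S \<noteq> {} \<and> S \<subset> U})"

text \<open>Sum over the edges {a,b} of E(U) of w_ab * |v a - v b|; each unordered
edge appears twice in the double sum (w a a = 0 so loops contribute nothing).\<close>
definition edge_sumU :: "('a \<Rightarrow> 'a \<Rightarrow> nat) \<Rightarrow> 'a set \<Rightarrow> real^'a \<Rightarrow> real" where
  "edge_sumU w U v = (\<Sum>a\<in>U. \<Sum>b\<in>U. real (w a b) * \<bar>v $ a - v $ b\<bar>) / 2"

end

theory Submission
  imports Defs
begin

text \<open>The vector \<open>v = L\<^sup>+ (\<one>\<^sub>s - \<one>\<^sub>t)\<close> is the potential of a unit electrical flow
  from s to t, so at most one unit of flow crosses any threshold cut \<open>{x. v x > \<theta>}\<close>.
  Fix a threshold \<open>\<theta>\<^sub>0\<close> halving vol(U) and let \<open>g \<theta>\<close> be the volume of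
  \<open>{x \<in> U. v x > \<theta>}\<close>. Raising the threshold by l clears the cut of this set, except for
  edges of total weight at most 1/l; as the cut is at least \<open>\<Phi> g\<close>, the choice
  \<open>l = 2 / cut\<close> multiplies g by \<open>1 - \<Phi>/2\<close>, while the part of the edge sum between
  the two thresholds is at most \<open>l g \<le> 2/\<Phi>\<close>. After \<open>O(ln vol(U) / \<Phi>)\<close> steps g
  vanishes, so the edge sum above \<open>\<theta>\<^sub>0\<close> is at most \<open>4 ln vol(U) / \<Phi>\<^sup>2\<close>; below
  \<open>\<theta>\<^sub>0\<close> the same argument applies to -v.\<close>

section \<open>Electrical flows\<close>

definition net_flow :: "('a::finite \<Rightarrow> 'a \<Rightarrow> nat) \<Rightarrow> ('a \<Rightarrow> real) \<Rightarrow> 'a \<Rightarrow> real" where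
  "net_flow w p a = (\<Sum>c\<in>UNIV. real (w a c) * (p a - p c))"

lemma laplacian_mult_vec:
  assumes "wgraph w"
  shows "(laplacian w *v v) $ a = net_flow w (($) v) a"
proof -
  have "(laplacian w *v v) $ a
      = (\<Sum>c\<in>UNIV. (if a = c then (\<Sum>d\<in>UNIV. real (w a d)) * v$c else 0) - real (w a c) * v$c)"
    using assms by (auto simp: laplacian_def matrix_vector_mult_def wgraph_def intro!: sum.cong)
  also have "\<dots> = net_flow w (($) v) a"
    by (simp add: net_flow_def sum_subtractf sum_distrib_right right_diff_distrib)
  finally show ?thesis .
qed

lemma net_flow_uminus: "net_flow w (\<lambda>x. - p x) a = - net_flow w p a"
  by (simp add: net_flow_def sum_negf[symmetric] algebra_simps)

lemma sum_net_flow_eq_0: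
  assumes "wgraph w"
  shows "(\<Sum>a\<in>UNIV. net_flow w p a) = 0"
proof -
  have "(\<Sum>a\<in>UNIV. \<Sum>c\<in>UNIV. real (w a c) * p c) = (\<Sum>a\<in>UNIV. \<Sum>c\<in>UNIV. real (w a c) * p a)"
    using assms by (subst sum.swap) (simp add: wgraph_def)
  then show ?thesis
    by (simp add: net_flow_def right_diff_distrib sum_subtractf)
qed

lemma net_flow_out_of_set:
  assumes "wgraph w"
  shows "(\<Sum>a\<in>S. \<Sum>c\<in>-S. real (w a c) * (p a - p c)) = (\<Sum>a\<in>S. net_flow w p a)"
proof -
  define inner where "inner = (\<Sum>a\<in>S. \<Sum>c\<in>S. real (w a c) * (p a - p c))"
  have "inner = (\<Sum>c\<in>S. \<Sum>a\<in>S. real (w a c) * (p a - p c))"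
    unfolding inner_def by (rule sum.swap)
  also have "\<dots> = - inner"
    unfolding inner_def sum_negf[symmetric]
    using assms by (intro sum.cong refl) (simp add: wgraph_def algebra_simps)
  finally have "inner = 0" by simp
  have "net_flow w p a = (\<Sum>c\<in>-S. real (w a c) * (p a - p c)) + (\<Sum>c\<in>S. real (w a c) * (p a - p c))"
    for a
    using sum.subset_diff[of S UNIV] by (simp add: net_flow_def Compl_eq_Diff_UNIV)
  then show ?thesis
    using \<open>inner = 0\<close> by (simp add: inner_def sum.distrib)
qed

lemma connected_harmonic_const:
  assumes "wgraph w" "connected_graph w" "\<And>a. net_flow w p a = 0"
  shows "p a = p b"
proof -
  have "Max (range p) \<in> range p"
    by (rule Max_in) auto
  then obtain m where "p m = Max (range p)"
    by (metis rangeE)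
  then have m: "p y \<le> p m" for y
    by simp
  have "p c = p m" if "(m, c) \<in> (edge_rel w)\<^sup>*" for c
    using that
  proof (induction rule: rtrancl_induct)
    case (step b c)
    text \<open>A maximum is only attained at a vertex whose neighbours all share the maximal value.\<close>
    have "\<forall>d\<in>UNIV. 0 \<le> real (w b d) * (p b - p d)"
      using m step.IH by simp
    then have "real (w b c) * (p b - p c) = 0"
      using assms(3)[of b] sum_nonneg_eq_0_iff[of UNIV "\<lambda>d. real (w b d) * (p b - p d)"]
      by (simp add: net_flow_def)
    then show ?case
      using step by (simp add: edge_rel_def)
  qed simp
  then show ?thesis
    using assms(2) unfolding connected_graph_def by metis
qed

section \<open>The pseudoinverse of the Laplacian\<close>

lemma matrix_add_rdistrib: "(A + B) ** C = A ** C + B ** (C :: 'a::semiring_1^_^_)"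
  by (vector matrix_matrix_mult_def sum.distrib[symmetric] field_simps)

lemma matrix_diff_ldistrib: "A ** (B - C) = A ** B - A ** (C :: 'a::ring_1^_^_)"
  by (vector matrix_matrix_mult_def sum_subtractf[symmetric] field_simps)

lemma matrix_diff_rdistrib: "(A - B) ** C = A ** C - B ** (C :: 'a::ring_1^_^_)"
  by (vector matrix_matrix_mult_def sum_subtractf[symmetric] field_simps)

lemma penrose_unique:
  fixes A X Y :: "real^'n^'n"
  assumes "A ** X ** A = A" "X ** A ** X = X" "transpose (A ** X) = A ** X" "transpose (X ** A) = X ** A"
      and "A ** Y ** A = A" "Y ** A ** Y = Y" "transpose (A ** Y) = A ** Y" "transpose (Y ** A) = Y ** A"
  shows "X = Y"
proof -
  have "X = X ** transpose (A ** X)"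
    using assms(2,3) by (simp add: matrix_mul_assoc)
  also have "\<dots> = X ** transpose X ** transpose (A ** Y ** A)"
    using assms(5) by (simp add: matrix_transpose_mul matrix_mul_assoc)
  also have "\<dots> = X ** transpose (A ** X) ** transpose (A ** Y)"
    by (simp add: matrix_transpose_mul matrix_mul_assoc)
  also have "\<dots> = X ** (A ** X) ** (A ** Y)"
    using assms(3,7) by simp
  also have "\<dots> = X ** A ** Y"
    using assms(2) by (simp add: matrix_mul_assoc)
  finally have XAY: "X = X ** A ** Y" .
  have "Y = transpose (Y ** A) ** Y"
    using assms(6,8) by (simp add: matrix_mul_assoc)
  also have "\<dots> = transpose (A ** X ** A) ** transpose Y ** Y"
    using assms(1) by (simp add: matrix_transpose_mul)
  also have "\<dots> = transpose (X ** A) ** transpose (Y ** A) ** Y"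
    by (simp add: matrix_transpose_mul matrix_mul_assoc)
  also have "\<dots> = (X ** A) ** (Y ** A) ** Y"
    using assms(4,8) by simp
  also have "\<dots> = X ** A ** Y"
    using assms(6) by (metis matrix_mul_assoc)
  finally show ?thesis
    using XAY by simp
qed

lemma pinv_eq_shifted_inverse:
  fixes A P B :: "real^'n^'n"
  assumes PP: "P ** P = P" and AP: "A ** P = 0" and PA: "P ** A = 0"
    and P_sym: "transpose P = P" and B: "B ** (A + P) = mat 1"
  shows "pinv A = B - P" and "A ** pinv A = mat 1 - P"
proof -
  have B': "(A + P) ** B = mat 1"
    using B by (simp add: matrix_left_right_inverse)
  have BP: "B ** P = P"
    by (metis B matrix_add_rdistrib AP PP add_0 matrix_mul_assoc matrix_mul_lid)
  have PB: "P ** B = P"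
    by (metis B' matrix_add_ldistrib PA PP add_0 matrix_mul_assoc matrix_mul_rid)
  have AX: "A ** (B - P) = mat 1 - P"
    using B' PB by (simp add: matrix_diff_ldistrib AP matrix_add_rdistrib algebra_simps)
  have XA: "(B - P) ** A = mat 1 - P"
    using B BP by (simp add: matrix_diff_rdistrib PA matrix_add_ldistrib algebra_simps)
  have sym: "transpose (mat 1 - P) = mat 1 - P"
    using P_sym by (simp add: transpose_def mat_def vec_eq_iff)
  have penrose: "A ** (B - P) ** A = A \<and> (B - P) ** A ** (B - P) = B - P \<and>
      transpose (A ** (B - P)) = A ** (B - P) \<and> transpose ((B - P) ** A) = (B - P) ** A"
    using AX XA sym PA PB PP
    by (simp add: matrix_diff_rdistrib matrix_diff_ldistrib matrix_mul_assoc)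
  show "pinv A = B - P"
    unfolding pinv_def using penrose penrose_unique by (intro the_equality) blast+
  then show "A ** pinv A = mat 1 - P"
    using AX by simp
qed

definition mean_proj :: "real^'a::finite^'a" where
  "mean_proj = (\<chi> i j. 1 / real CARD('a))"

lemma mean_proj_mult_vec: "(mean_proj :: real^'a::finite^'a) *v x = (\<chi> i. (\<Sum>j\<in>UNIV. x$j) / real CARD('a))"
  by (simp add: mean_proj_def matrix_vector_mult_def vec_eq_iff sum_divide_distrib)

lemma laplacian_plus_mean_proj_inj:
  fixes w :: "'a::finite \<Rightarrow> 'a \<Rightarrow> nat"
  assumes "wgraph w" "connected_graph w" "(laplacian w + mean_proj) *v x = 0"
  shows "x = 0"
proof -
  have "(\<Sum>i\<in>UNIV. ((laplacian w + mean_proj) *v x) $ i) = (\<Sum>j\<in>UNIV. x$j)"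
    using sum_net_flow_eq_0[OF assms(1)]
    by (simp add: matrix_vector_mult_add_rdistrib sum.distrib laplacian_mult_vec[OF assms(1)]
        mean_proj_mult_vec)
  then have "(\<Sum>j\<in>UNIV. x$j) = 0"
    using assms(3) by simp
  then have "laplacian w *v x = 0"
    using assms(3) by (simp add: matrix_vector_mult_add_rdistrib mean_proj_mult_vec vec_eq_iff)
  then have "net_flow w (($) x) a = 0" for a
    by (metis laplacian_mult_vec[OF assms(1)] zero_index)
  then have const: "x$j = x$i" for i j
    by (rule connected_harmonic_const[OF assms(1,2)])
  have "(\<Sum>j\<in>UNIV. x$j) = (\<Sum>j\<in>(UNIV::'a set). x$i)" for i
    by (rule sum.cong) (rule refl, rule const)
  with \<open>(\<Sum>j\<in>UNIV. x$j) = 0\<close> show ?thesis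
    by (simp add: vec_eq_iff)
qed

lemma laplacian_mult_pinv:
  assumes "wgraph w" "connected_graph w"
  shows "laplacian w ** pinv (laplacian w) = mat 1 - mean_proj"
proof -
  obtain B where "B ** (laplacian w + mean_proj) = mat 1"
    using laplacian_plus_mean_proj_inj[OF assms] matrix_left_invertible_ker by blast
  moreover have "mean_proj ** mean_proj = (mean_proj :: real^'a^'a)"
    by (subst matrix_eq) (simp add: matrix_vector_mul_assoc[symmetric] mean_proj_mult_vec)
  moreover have "laplacian w ** mean_proj = 0"
    by (subst matrix_eq)
      (simp add: matrix_vector_mul_assoc[symmetric] mean_proj_mult_vec vec_eq_iff
        laplacian_mult_vec[OF assms(1)] net_flow_def)
  moreover have "mean_proj ** laplacian w = 0"
    by (subst matrix_eq)
      (simp add: matrix_vector_mul_assoc[symmetric] mean_proj_mult_vec vec_eq_iff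
        laplacian_mult_vec[OF assms(1)] sum_net_flow_eq_0[OF assms(1)])
  moreover have "transpose mean_proj = (mean_proj :: real^'a^'a)"
    by (simp add: mean_proj_def transpose_def vec_eq_iff)
  ultimately show ?thesis
    by (rule pinv_eq_shifted_inverse(2)[rotated -1])
qed

lemma net_flow_pinv_laplacian:
  assumes "wgraph w" "connected_graph w" "(\<Sum>j\<in>UNIV. b$j) = 0"
  shows "net_flow w (($) (pinv (laplacian w) *v b)) a = b $ a"
proof -
  have "laplacian w *v (pinv (laplacian w) *v b) = (mat 1 - mean_proj) *v b"
    by (simp add: matrix_vector_mul_assoc laplacian_mult_pinv[OF assms(1,2)])
  also have "\<dots> = b"
    using assms(3) by (simp add: matrix_vector_mult_diff_rdistrib mean_proj_mult_vec vec_eq_iff)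
  finally show ?thesis
    by (metis laplacian_mult_vec[OF assms(1)])
qed

section \<open>Volume, cut and conductance of the induced subgraph\<close>

lemma degU_nonneg: "0 \<le> degU w U a"
  by (simp add: degU_def sum_nonneg)

lemma volU_nonneg: "0 \<le> volU w U S"
  by (simp add: volU_def degU_nonneg sum_nonneg)

lemma volU_in_Nats: "volU w U S \<in> \<nat>"
  by (simp add: volU_def degU_def flip: of_nat_sum)

lemma volU_diff: "finite T \<Longrightarrow> S \<subseteq> T \<Longrightarrow> volU w U (T - S) = volU w U T - volU w U S"
  unfolding volU_def by (simp add: sum_diff)

lemma cutU_le_volU:
  assumes "wgraph w" "S \<subseteq> U" "finite U"
  shows "cutU w U S \<le> volU w U S" and "cutU w U S \<le> volU w U (U - S)"
proof -
  show "cutU w U S \<le> volU w U S"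
    unfolding cutU_def volU_def degU_def using assms(3) by (intro sum_mono sum_mono2) auto
  have "cutU w U S = (\<Sum>b\<in>U - S. \<Sum>a\<in>S. real (w b a))"
    unfolding cutU_def using assms(1) by (subst sum.swap) (simp add: wgraph_def)
  also have "\<dots> \<le> volU w U (U - S)"
    unfolding volU_def degU_def using assms(2,3) by (intro sum_mono sum_mono2) auto
  finally show "cutU w U S \<le> volU w U (U - S)" .
qed

lemma conductance_le:
  fixes w :: "'a::finite \<Rightarrow> 'a \<Rightarrow> nat"
  assumes "S \<noteq> {}" "S \<subset> U"
  shows "conductance w U \<le> cutU w U S / min (volU w U S) (volU w U (U - S))"
  unfolding conductance_def using assms by (intro Min_le) auto

lemma conductance_le_1:
  fixes w :: "'a::finite \<Rightarrow> 'a \<Rightarrow> nat"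
  assumes "wgraph w" "has_edge_in w U"
  shows "conductance w U \<le> 1"
proof -
  obtain a b where ab: "a \<in> U" "b \<in> U" "0 < w a b"
    using assms(2) by (auto simp: has_edge_in_def)
  with assms(1) have "{a} \<subset> U"
    by (auto simp: wgraph_def)
  have "cutU w U {a} \<le> min (volU w U {a}) (volU w U (U - {a}))"
    using cutU_le_volU[OF assms(1), of "{a}" U] ab(1) by simp
  moreover have "0 \<le> min (volU w U {a}) (volU w U (U - {a}))"
    by (simp add: volU_nonneg)
  ultimately have "cutU w U {a} / min (volU w U {a}) (volU w U (U - {a})) \<le> 1"
    by (auto simp: divide_le_eq_1 le_less)
  then show ?thesis
    using conductance_le[of "{a}" U w] \<open>{a} \<subset> U\<close> by simp
qed

lemma volU_ge_1:
  assumes "has_edge_in w U" "finite U"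
  shows "1 \<le> volU w U U"
proof -
  obtain a b where ab: "a \<in> U" "b \<in> U" "0 < w a b"
    using assms(1) by (auto simp: has_edge_in_def)
  have "real (w a b) \<le> degU w U a"
    unfolding degU_def using ab assms(2) by (intro member_le_sum) auto
  also have "\<dots> \<le> volU w U U"
    unfolding volU_def using ab assms(2) by (intro member_le_sum degU_nonneg) auto
  finally show ?thesis
    using ab by simp
qed

section \<open>Sweeping threshold cuts\<close>

abbreviation superlevel :: "'a set \<Rightarrow> ('a \<Rightarrow> real) \<Rightarrow> real \<Rightarrow> 'a set" where
  "superlevel U p \<theta> \<equiv> {x\<in>U. \<theta> < p x}"

lemma threshold_flow_le:
  assumes "wgraph w" and unit: "\<And>S. (\<Sum>a\<in>S. net_flow w p a) \<le> 1"
  shows "(\<Sum>a\<in>superlevel U p \<theta>. \<Sum>b\<in>U - superlevel U p \<theta>. real (w a b) * (p a - p b)) \<le> 1"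
proof -
  define S where "S = {x. \<theta> < p x}"
  have "(\<Sum>a\<in>superlevel U p \<theta>. \<Sum>b\<in>U - superlevel U p \<theta>. real (w a b) * (p a - p b))
      \<le> (\<Sum>a\<in>superlevel U p \<theta>. \<Sum>b\<in>-S. real (w a b) * (p a - p b))"
    by (intro sum_mono sum_mono2) (auto simp: S_def)
  also have "\<dots> \<le> (\<Sum>a\<in>S. \<Sum>b\<in>-S. real (w a b) * (p a - p b))"
    by (intro sum_mono2 sum_nonneg) (auto simp: S_def)
  also have "\<dots> = (\<Sum>a\<in>S. net_flow w p a)"
    by (rule net_flow_out_of_set[OF assms(1)])
  finally show ?thesis
    using unit[of S] by linarith
qed

text \<open>Raising the threshold by l removes the cut edges from the superlevel set at the
  price of 1/l: cut edges still leaving the higher superlevel set span a potential drop of at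
  least l, so their weight is at most the flow across the threshold divided by l.\<close>
lemma superlevel_sweep:
  fixes w :: "'a::finite \<Rightarrow> 'a \<Rightarrow> nat"
  assumes flow: "(\<Sum>a\<in>superlevel U p \<theta>. \<Sum>b\<in>U - superlevel U p \<theta>. real (w a b) * (p a - p b)) \<le> 1"
    and "0 < l"
  shows "volU w U (superlevel U p (\<theta> + l))
           \<le> volU w U (superlevel U p \<theta>) - cutU w U (superlevel U p \<theta>) + 1 / l"
proof -
  define S where "S = superlevel U p \<theta>"
  define S' where "S' = superlevel U p (\<theta> + l)"
  have "S' \<subseteq> S"
    unfolding S_def S'_def using \<open>0 < l\<close> by auto
  have cut: "cutU w U S = (\<Sum>a\<in>S - S'. \<Sum>b\<in>U - S. real (w a b)) + (\<Sum>a\<in>S'. \<Sum>b\<in>U - S. real (w a b))"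
    unfolding cutU_def using sum.subset_diff[OF \<open>S' \<subseteq> S\<close>] by simp
  have "(\<Sum>a\<in>S - S'. \<Sum>b\<in>U - S. real (w a b)) \<le> volU w U (S - S')"
    unfolding volU_def degU_def by (intro sum_mono sum_mono2) auto
  also have "\<dots> = volU w U S - volU w U S'"
    using \<open>S' \<subseteq> S\<close> by (simp add: volU_diff)
  finally have inner: "(\<Sum>a\<in>S - S'. \<Sum>b\<in>U - S. real (w a b)) \<le> volU w U S - volU w U S'" .
  have "(\<Sum>a\<in>S'. \<Sum>b\<in>U - S. real (w a b)) \<le> (\<Sum>a\<in>S'. \<Sum>b\<in>U - S. real (w a b) * (p a - p b) / l)"
  proof (intro sum_mono)
    fix a b
    assume "a \<in> S'" "b \<in> U - S"
    then have "real (w a b) * l \<le> real (w a b) * (p a - p b)"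
      unfolding S_def S'_def by (intro mult_left_mono) auto
    then show "real (w a b) \<le> real (w a b) * (p a - p b) / l"
      using \<open>0 < l\<close> by (simp add: field_simps)
  qed
  also have "\<dots> = (\<Sum>a\<in>S'. \<Sum>b\<in>U - S. real (w a b) * (p a - p b)) / l"
    by (simp add: sum_divide_distrib)
  also have "(\<Sum>a\<in>S'. \<Sum>b\<in>U - S. real (w a b) * (p a - p b)) \<le> (\<Sum>a\<in>S. \<Sum>b\<in>U - S. real (w a b) * (p a - p b))"
    using \<open>S' \<subseteq> S\<close> by (intro sum_mono2 sum_nonneg) (auto simp: S_def)
  also have "\<dots> \<le> 1"
    using flow unfolding S_def .
  finally have outer: "(\<Sum>a\<in>S'. \<Sum>b\<in>U - S. real (w a b)) \<le> 1 / l"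
    using \<open>0 < l\<close> by (simp add: divide_right_mono)
  show ?thesis
    using cut inner outer unfolding S_def S'_def by linarith
qed

text \<open>Summed over both orientations, the edge \<open>{a, b}\<close> contributes the length of the part
  of the interval between \<open>p a\<close> and \<open>p b\<close> lying above \<open>\<theta>\<close>.\<close>
definition variation_above :: "('a \<Rightarrow> 'a \<Rightarrow> nat) \<Rightarrow> 'a set \<Rightarrow> ('a \<Rightarrow> real) \<Rightarrow> real \<Rightarrow> real" where
  "variation_above w U p \<theta> = (\<Sum>a\<in>U. \<Sum>b\<in>U. real (w a b) * max 0 (p a - max (p b) \<theta>))"

lemma variation_above_step:
  assumes "finite U" "0 \<le> l"
  shows "variation_above w U p \<theta> \<le> variation_above w U p (\<theta> + l) + l * volU w U (superlevel U p \<theta>)"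
proof -
  have "variation_above w U p \<theta> \<le> (\<Sum>a\<in>U. \<Sum>b\<in>U. real (w a b) * max 0 (p a - max (p b) (\<theta> + l))
          + l * (if \<theta> < p a then real (w a b) else 0))"
    unfolding variation_above_def
  proof (intro sum_mono)
    fix a b
    have "max 0 (p a - max (p b) \<theta>) \<le> max 0 (p a - max (p b) (\<theta> + l)) + l * (if \<theta> < p a then 1 else 0)"
      using assms by (auto simp: max_def)
    from mult_left_mono[OF this, of "real (w a b)"]
    show "real (w a b) * max 0 (p a - max (p b) \<theta>) \<le> real (w a b) * max 0 (p a - max (p b) (\<theta> + l))
          + l * (if \<theta> < p a then real (w a b) else 0)"
      by (simp add: algebra_simps if_distrib cong: if_cong)
  qed
  also have "\<dots> = variation_above w U p (\<theta> + l) + l * (\<Sum>a\<in>U. if \<theta> < p a then degU w U a else 0)"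
    by (auto simp: variation_above_def degU_def sum.distrib sum_distrib_left intro!: sum.cong)
  also have "(\<Sum>a\<in>U. if \<theta> < p a then degU w U a else 0) = volU w U (superlevel U p \<theta>)"
    using assms(1) by (simp add: volU_def sum.inter_filter)
  finally show ?thesis .
qed

lemma variation_above_eq_0:
  assumes "volU w U (superlevel U p \<theta>) = 0" "finite U"
  shows "variation_above w U p \<theta> = 0"
proof -
  have "real (w a b) = 0" if "a \<in> U" "b \<in> U" "\<theta> < p a" for a b
  proof -
    have "degU w U a = 0"
      using assms that sum_nonneg_eq_0_iff[of "superlevel U p \<theta>" "degU w U"]
      by (simp add: volU_def degU_nonneg)
    then show ?thesis
      using that(2) assms(2) sum_nonneg_eq_0_iff[of U "\<lambda>b. real (w a b)"] by (simp add: degU_def)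
  qed
  then show ?thesis
    unfolding variation_above_def by (intro sum.neutral ballI) (auto simp: max_def)
qed

lemma edge_sumU_eq_variation_above:
  assumes "wgraph w"
  shows "edge_sumU w U v = variation_above w U (($) v) \<theta> + variation_above w U (\<lambda>x. - v$x) (- \<theta>)"
proof -
  define T where
    "T a b = max 0 (v$a - max (v$b) \<theta>) + max 0 (- v$a - max (- v$b) (- \<theta>))" for a b
  have "\<bar>v$a - v$b\<bar> = T a b + T b a" for a b
    unfolding T_def by (auto simp: max_def abs_if)
  then have "(\<Sum>a\<in>U. \<Sum>b\<in>U. real (w a b) * \<bar>v$a - v$b\<bar>)
      = (\<Sum>a\<in>U. \<Sum>b\<in>U. real (w a b) * T a b) + (\<Sum>a\<in>U. \<Sum>b\<in>U. real (w a b) * T b a)"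
    by (simp add: distrib_left sum.distrib)
  also have "(\<Sum>a\<in>U. \<Sum>b\<in>U. real (w a b) * T b a) = (\<Sum>a\<in>U. \<Sum>b\<in>U. real (w a b) * T a b)"
    using assms by (subst sum.swap) (simp add: wgraph_def)
  finally show ?thesis
    by (simp add: edge_sumU_def variation_above_def T_def distrib_left sum.distrib)
qed

lemma median_threshold:
  assumes "finite U" "U \<noteq> {}"
  obtains \<theta> where "volU w U (superlevel U p \<theta>) \<le> volU w U U / 2"
    and "volU w U {x\<in>U. p x < \<theta>} \<le> volU w U U / 2"
proof -
  define A where "A = {t \<in> p ` U. volU w U (superlevel U p t) \<le> volU w U U / 2}"
  have "superlevel U p (Max (p ` U)) = {}"
    using assms(1) by (auto simp: not_less)
  then have "volU w U (superlevel U p (Max (p ` U))) = 0"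
    by (simp only: volU_def sum.empty)
  moreover have "Max (p ` U) \<in> p ` U"
    using assms by (intro Max_in) auto
  ultimately have "Max (p ` U) \<in> A"
    unfolding A_def using volU_nonneg[of w U U] by (intro CollectI conjI) linarith+
  then have "A \<noteq> {}" "finite A"
    using assms(1) by (auto simp: A_def)
  define \<theta> where "\<theta> = Min A"
  have "\<theta> \<in> A"
    unfolding \<theta>_def using \<open>finite A\<close> \<open>A \<noteq> {}\<close> by (rule Min_in)
  have "volU w U {x\<in>U. p x < \<theta>} \<le> volU w U U / 2"
  proof (cases "{x\<in>U. p x < \<theta>} = {}")
    case False
    define L where "L = {x\<in>U. p x < \<theta>}"
    define t where "t = Max (p ` L)"
    have "finite L"
      using assms(1) by (simp add: L_def)
    have "t \<in> p ` L"
      unfolding t_def using False \<open>finite L\<close> by (intro Max_in) (auto simp: L_def)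
    then have "t < \<theta>" "t \<in> p ` U"
      by (auto simp: L_def)
    have "t \<notin> A"
    proof
      assume "t \<in> A"
      then have "\<theta> \<le> t"
        unfolding \<theta>_def using \<open>finite A\<close> by simp
      with \<open>t < \<theta>\<close> show False by simp
    qed
    then have big: "volU w U U / 2 < volU w U (superlevel U p t)"
      using \<open>t \<in> p ` U\<close> by (simp add: A_def)
    have le_t: "p x \<le> t" if "x \<in> L" for x
      unfolding t_def using \<open>finite L\<close> that by (intro Max_ge) auto
    have "superlevel U p t = U - L"
    proof
      show "superlevel U p t \<subseteq> U - L"
        using le_t by fastforce
      show "U - L \<subseteq> superlevel U p t"
        using \<open>t < \<theta>\<close> by (auto simp: L_def)
    qed
    with big show ?thesis
      using assms(1) by (simp add: volU_diff L_def)
  next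
    case True
    show ?thesis
      unfolding True using volU_nonneg[of w U U] by (simp add: volU_def)
  qed
  with \<open>\<theta> \<in> A\<close> show ?thesis
    using that by (auto simp: A_def)
qed

text \<open>Each step raises the threshold by \<open>l = 2 / c \<theta>\<close>: this costs at most \<open>2 / \<Phi>\<close> in D
  and shrinks g by the factor \<open>1 - \<Phi> / 2\<close>, whose logarithm is at most \<open>- \<Phi> / 2\<close>.\<close>
lemma threshold_descent_bound:
  fixes g c D :: "real \<Rightarrow> real" and \<Phi> G :: real
  assumes "0 < \<Phi>" "\<Phi> < 2"
    and g_Nats: "\<And>\<theta>. g \<theta> \<in> \<nat>"
    and cut: "\<And>\<theta>. 0 < g \<theta> \<Longrightarrow> g \<theta> \<le> G \<Longrightarrow> \<Phi> * g \<theta> \<le> c \<theta>"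
    and sweep: "\<And>\<theta> l. 0 < l \<Longrightarrow> g (\<theta> + l) \<le> g \<theta> - c \<theta> + 1 / l"
    and D_step: "\<And>\<theta> l. 0 \<le> l \<Longrightarrow> D \<theta> \<le> D (\<theta> + l) + l * g \<theta>"
    and D_zero: "\<And>\<theta>. g \<theta> = 0 \<Longrightarrow> D \<theta> = 0"
  shows "0 < g \<theta> \<Longrightarrow> g \<theta> \<le> G \<Longrightarrow> D \<theta> \<le> 2 / \<Phi> + 4 * ln (g \<theta>) / \<Phi>^2"
proof (induction "nat \<lfloor>g \<theta>\<rfloor>" arbitrary: \<theta> rule: less_induct)
  case less
  have g_nonneg: "0 \<le> g \<theta>" for \<theta>
    using g_Nats[of \<theta>] by (auto elim: Nats_cases)
  have "1 \<le> g \<theta>"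
    using g_Nats[of \<theta>] less.prems(1) by (auto elim!: Nats_cases)
  have c: "\<Phi> * g \<theta> \<le> c \<theta>"
    using cut less.prems by blast
  with mult_pos_pos[OF \<open>0 < \<Phi>\<close> less.prems(1)] have "0 < c \<theta>"
    by linarith
  define l where "l = 2 / c \<theta>"
  have "0 < l"
    using \<open>0 < c \<theta>\<close> by (simp add: l_def)
  have "g (\<theta> + l) \<le> g \<theta> - c \<theta> / 2"
    using sweep[OF \<open>0 < l\<close>, of \<theta>] by (simp add: l_def)
  then have shrink: "g (\<theta> + l) \<le> (1 - \<Phi> / 2) * g \<theta>" and "g (\<theta> + l) < g \<theta>"
    using c \<open>0 < c \<theta>\<close> by (simp_all add: algebra_simps)
  have "l * g \<theta> \<le> 2 / \<Phi>"
    using c \<open>0 < \<Phi>\<close> \<open>0 < c \<theta>\<close> by (simp add: l_def field_simps)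
  then have D_le: "D \<theta> \<le> D (\<theta> + l) + 2 / \<Phi>"
    using D_step[of l \<theta>] \<open>0 < l\<close> by simp
  show ?case
  proof (cases "g (\<theta> + l) = 0")
    case True
    have "0 \<le> 4 * ln (g \<theta>) / \<Phi>^2"
      using \<open>1 \<le> g \<theta>\<close> by simp
    then show ?thesis
      using D_le D_zero[OF True] by simp
  next
    case False
    then have "0 < g (\<theta> + l)"
      using g_nonneg by (simp add: order_le_neq_trans)
    have "nat \<lfloor>g (\<theta> + l)\<rfloor> < nat \<lfloor>g \<theta>\<rfloor>"
      using g_Nats[of \<theta>] g_Nats[of "\<theta> + l"] \<open>g (\<theta> + l) < g \<theta>\<close> by (auto elim!: Nats_cases)
    then have IH: "D (\<theta> + l) \<le> 2 / \<Phi> + 4 * ln (g (\<theta> + l)) / \<Phi>^2"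
      using less.hyps \<open>0 < g (\<theta> + l)\<close> \<open>g (\<theta> + l) < g \<theta>\<close> less.prems(2) by simp
    have "ln (g (\<theta> + l)) \<le> ln ((1 - \<Phi> / 2) * g \<theta>)"
      using shrink \<open>0 < g (\<theta> + l)\<close> by simp
    also have "\<dots> = ln (1 - \<Phi> / 2) + ln (g \<theta>)"
      using \<open>\<Phi> < 2\<close> less.prems(1) by (simp add: ln_mult)
    also have "ln (1 - \<Phi> / 2) \<le> - \<Phi> / 2"
      using \<open>\<Phi> < 2\<close> ln_le_minus_one[of "1 - \<Phi> / 2"] by simp
    finally have "4 * ln (g (\<theta> + l)) / \<Phi>^2 \<le> 4 * ln (g \<theta>) / \<Phi>^2 - 2 / \<Phi>"
      using \<open>0 < \<Phi>\<close> by (simp add: field_simps power2_eq_square)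
    with IH D_le show ?thesis
      by linarith
  qed
qed

lemma variation_above_le_conductance:
  fixes w :: "'a::finite \<Rightarrow> 'a \<Rightarrow> nat"
  assumes "wgraph w" "has_edge_in w U" "0 < conductance w U"
    and flow: "\<And>\<theta>. (\<Sum>a\<in>superlevel U p \<theta>. \<Sum>b\<in>U - superlevel U p \<theta>. real (w a b) * (p a - p b)) \<le> 1"
    and half: "volU w U (superlevel U p \<theta>) \<le> volU w U U / 2"
  shows "variation_above w U p \<theta> \<le> 4 * ln (volU w U U) / (conductance w U)^2"
proof -
  define \<Phi> where "\<Phi> = conductance w U"
  define V where "V = volU w U U"
  define g where "g \<theta> = volU w U (superlevel U p \<theta>)" for \<theta>
  have "0 < \<Phi>" "\<Phi> \<le> 1" "1 \<le> V"
    using assms(3) conductance_le_1[OF assms(1,2)] volU_ge_1[OF assms(2)] by (simp_all add: \<Phi>_def V_def)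
  have cut: "\<Phi> * g \<theta> \<le> cutU w U (superlevel U p \<theta>)" if "0 < g \<theta>" "g \<theta> \<le> V / 2" for \<theta>
  proof -
    define S where "S = superlevel U p \<theta>"
    have "g \<theta> = volU w U S"
      by (simp add: g_def S_def)
    then have "S \<noteq> {}" "S \<noteq> U"
      using that \<open>1 \<le> V\<close> by (auto simp: V_def volU_def)
    then have "S \<noteq> {}" "S \<subset> U"
      by (auto simp: S_def)
    moreover have "min (volU w U S) (volU w U (U - S)) = g \<theta>"
      using that \<open>S \<subset> U\<close> by (simp add: g_def V_def S_def volU_diff)
    ultimately have "\<Phi> \<le> cutU w U S / g \<theta>"
      using conductance_le[of S U w] by (simp add: \<Phi>_def)
    then show ?thesis
      using that(1) by (simp add: S_def field_simps)
  qed
  show ?thesis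
  proof (cases "g \<theta> = 0")
    case True
    then show ?thesis
      using variation_above_eq_0[where p = p and \<theta> = \<theta>] \<open>1 \<le> V\<close> by (simp add: g_def V_def)
  next
    case False
    then have "0 < g \<theta>"
      by (simp add: g_def order_le_neq_trans volU_nonneg)
    have "variation_above w U p \<theta> \<le> 2 / \<Phi> + 4 * ln (g \<theta>) / \<Phi>^2"
      using \<open>0 < \<Phi>\<close> \<open>\<Phi> \<le> 1\<close> volU_in_Nats cut superlevel_sweep[OF flow]
        variation_above_step[of U] variation_above_eq_0[where p = p] \<open>0 < g \<theta>\<close> half
      by (intro threshold_descent_bound[where g = g and G = "V / 2"]) (simp_all add: g_def V_def)
    also have "\<dots> \<le> 2 / \<Phi> + 4 * (ln V - ln 2) / \<Phi>^2"
    proof -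
      have "ln (g \<theta>) \<le> ln (V / 2)"
        using half \<open>0 < g \<theta>\<close> by (simp add: g_def V_def)
      also have "\<dots> = ln V - ln 2"
        using \<open>1 \<le> V\<close> by (simp add: ln_div)
      finally show ?thesis
        by (simp add: divide_right_mono)
    qed
    also have "\<dots> \<le> 4 * ln V / \<Phi>^2"
    proof -
      have "1 / 2 \<le> ln (2::real)"
        using ln_le_minus_one[of "1 / 2"] by (simp add: ln_div)
      with \<open>0 < \<Phi>\<close> \<open>\<Phi> \<le> 1\<close> show ?thesis
        by (simp add: field_simps power2_eq_square)
    qed
    finally show ?thesis
      by (simp add: \<Phi>_def V_def)
  qed
qed

theorem mainTheorem15:
  fixes w :: "'a::finite \<Rightarrow> 'a \<Rightarrow> nat" and U :: "'a set" and s t :: 'a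
  assumes "wgraph w"
    and "connected_graph w"
    and "has_edge_in w U"
    and "conductance w U > 0"
    and "0 < w s t"
  shows "edge_sumU w U (pinv (laplacian w) *v (indic_vec s - indic_vec t))
           \<le> 8 * ln (volU w U U) / (conductance w U)^2"
proof -
  \<comment> \<open>The bound holds for every pair s, t.\<close>
  define b :: "real^'a" where "b = indic_vec s - indic_vec t"
  define v where "v = pinv (laplacian w) *v b"
  have "(\<Sum>a\<in>S. b $ a) = (if s \<in> S then 1 else 0) - (if t \<in> S then 1 else 0)" for S
    by (simp add: b_def indic_vec_def sum_subtractf)
  then have unit: "(\<Sum>a\<in>S. b $ a) \<le> 1" "(\<Sum>a\<in>S. - b $ a) \<le> 1"
    and "(\<Sum>a\<in>UNIV. b $ a) = 0" for S
    by (simp_all add: sum_negf)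
  from \<open>(\<Sum>a\<in>UNIV. b $ a) = 0\<close> have flow: "net_flow w (($) v) a = b $ a" for a
    unfolding v_def by (rule net_flow_pinv_laplacian[OF assms(1,2)])
  obtain \<theta> where "volU w U (superlevel U (($) v) \<theta>) \<le> volU w U U / 2"
      and "volU w U (superlevel U (\<lambda>x. - v $ x) (- \<theta>)) \<le> volU w U U / 2"
    using median_threshold[of U w "($) v"] assms(3) by (auto simp: has_edge_in_def)
  then have "variation_above w U (($) v) \<theta> \<le> 4 * ln (volU w U U) / (conductance w U)^2"
      and "variation_above w U (\<lambda>x. - v $ x) (- \<theta>) \<le> 4 * ln (volU w U U) / (conductance w U)^2"
    using unit flow net_flow_uminus[of w "($) v"]
    by (auto intro!: variation_above_le_conductance threshold_flow_le assms(1,3,4))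
  then show ?thesis
    using edge_sumU_eq_variation_above[OF assms(1), of U v \<theta>] by (simp add: v_def b_def)
qed

end
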